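(* Let $K$ be a non-Archimedean locally compact field of characteristic $p>0$ with group of 1-units $U=1+M_K$, and let $\Lambda$ be the set of locally analytic group endomorphisms $U\to U$. Let $f\in\Lambda$ with $f(1+x)=\sum_{n=0}^{\infty}a_nx^n$ for all $x\in M_K$, where $\sum a_nx^n\in 1+x\mathbb{F}_p[[x]]$. Then for each $n\ge0$, $a_n=0$ if and only if the Hasse derivative $\mathsf{D}^{(n)}f(1+x)$ is identically zero. In particular, $a_1=0$ if and only if $f(1+x)=g(1+x)^p$ for some $g\in\Lambda$.
   Context: $M_K$ is the maximal ideal of the ring of integers $R_K$ of $K$; with constant field $\mathbb{F}$ of order $q$ and uniformizer $\pi$, $K=\mathbb{F}((\pi))$, $U=1+\pi\mathbb{F}[[\pi]]$, and $|x|=q^{-v(x)}$. A continuous function $f$ on a ball $B_{\alpha,t}=\{u\in R_K:|u-\alpha|\le t\}$, $t=|\rho|$, is analytic there if $f(u)=\sum_{n\ge0}c_n\left(\frac{u-\alpha}{\rho}\right)^n$ with $c_n\in K$, $c_n\to0$; $f:U\to K$ is locally analytic if each $\alpha\in U$ has a ball $B_{\alpha,t_\alpha}\subset U$, $t_\alpha>0$, on which $f$ is analytic. The Hasse derivative of order $m$ of $f(1+x)=\sum_k a_kx^k$ is $\mathsf{D}^{(m)}f(1+x)=\sum_{k\ge m}\binom{k}{m}a_kx^{k-m}$. *)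

theory Defs
  imports "HOL-Analysis.Analysis" "HOL-Computational_Algebra.Formal_Laurent_Series"
begin

text \<open>The local field K = F((pi)) is modelled as the type 'a fls of formal Laurent
series over a finite field 'a (the constant field F, of order q = CARD('a)).
Convergence in K is the library (pi-adic) topology on fls.\<close>

definition absK :: "'a::{field,finite} fls \<Rightarrow> real" where
  "absK x = (if x = 0 then 0 else real CARD('a) powr (- real_of_int (fls_subdegree x)))"

definition RK :: "'a::{field,finite} fls set" where
  "RK = {u. absK u \<le> 1}"

definition MK :: "'a::{field,finite} fls set" where
  "MK = {x. absK x < 1}"

definition UK :: "'a::{field,finite} fls set" where
  "UK = (\<lambda>x. 1 + x) ` MK"

definition ballK :: "'a::{field,finite} fls \<Rightarrow> real \<Rightarrow> 'a fls set" where
  "ballK \<alpha> t = {u \<in> RK. absK (u - \<alpha>) \<le> t}"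

definition analytic_on_ballK ::
  "('a::{field,finite} fls \<Rightarrow> 'a fls) \<Rightarrow> 'a fls \<Rightarrow> 'a fls \<Rightarrow> bool" where
  "analytic_on_ballK f \<alpha> \<rho> \<longleftrightarrow>
     continuous_on (ballK \<alpha> (absK \<rho>)) f \<and>
     (\<exists>c :: nat \<Rightarrow> 'a fls. c \<longlonglongrightarrow> 0 \<and>
        (\<forall>u \<in> ballK \<alpha> (absK \<rho>). (\<lambda>n. c n * ((u - \<alpha>) / \<rho>) ^ n) sums f u))"

definition locally_analyticK :: "('a::{field,finite} fls \<Rightarrow> 'a fls) \<Rightarrow> bool" where
  "locally_analyticK f \<longleftrightarrow>
     (\<forall>\<alpha> \<in> UK. \<exists>\<rho>. \<rho> \<noteq> 0 \<and> ballK \<alpha> (absK \<rho>) \<subseteq> UK \<and> analytic_on_ballK f \<alpha> \<rho>)"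

definition LambdaK :: "('a::{field,finite} fls \<Rightarrow> 'a fls) set" where
  "LambdaK = {f. (\<forall>u \<in> UK. f u \<in> UK) \<and> (\<forall>u \<in> UK. \<forall>v \<in> UK. f (u * v) = f u * f v)
                 \<and> locally_analyticK f}"

definition prime_subfield :: "'a::{field,finite} set" where
  "prime_subfield = range of_nat"

end

theory Submission
  imports Defs
begin

text \<open>Write \<open>A = \<Sum> a\<^sub>n X\<^sup>n\<close>, so that \<open>f (1 + x) = A(x)\<close> on the maximal ideal.
Multiplicativity of \<open>f\<close> on the units \<open>1 + X\<close> and \<open>1 + X\<^sup>N\<close> gives the power series identities
\<open>A(X + X\<^sup>N (1 + X)) = A(X) A(X\<^sup>N)\<close> for all \<open>N \<ge> 1\<close>. Expanding the left-hand side by Taylor's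
formula \<open>A(X + H) = \<Sum>\<^sub>m D\<^sup>m A \<cdot> H\<^sup>m\<close> (\<open>D\<^sup>m\<close> the Hasse derivative of order \<open>m\<close>) with
\<open>H = X\<^sup>N (1 + X)\<close> and letting \<open>N\<close> grow separates the summands and yields
\<open>D\<^sup>m A \<cdot> (1 + X)\<^sup>m = a\<^sub>m A\<close>, hence \<open>a\<^sub>m = 0\<close> iff \<open>D\<^sup>m A = 0\<close>.

If \<open>a\<^sub>1 = 0\<close> then \<open>D\<^sup>1 A = 0\<close> kills every \<open>a\<^sub>k\<close> with \<open>p \<nmid> k\<close>; since the \<open>a\<^sub>k\<close> lie in \<open>\<bbbF>\<^sub>p\<close>,
Frobenius gives \<open>A = B\<^sup>p\<close> with \<open>B = \<Sum> a\<^sub>p\<^sub>n X\<^sup>n\<close>, and \<open>g (1 + x) = B(x)\<close> is the required root: it is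
multiplicative because Frobenius is injective, and locally analytic because multiplicativity
re-expands it around every point. Conversely \<open>f = g\<^sup>p\<close> makes \<open>A = (1 + c)\<^sup>p = 1 + c\<^sup>p\<close>, whose linear
coefficient vanishes.\<close>

unbundle fps_syntax
unbundle no vec_syntax

lemma CARD_field_ge_2: "CARD('a::{field,finite}) \<ge> 2"
proof -
  have "card {0::'a, 1} \<le> CARD('a)" by (rule card_mono) auto
  then show ?thesis by simp
qed

lemma absK_less_1_iff: "absK (x::'a::{field,finite} fls) < 1 \<longleftrightarrow> x = 0 \<or> fls_subdegree x > 0"
proof (cases "x = 0")
  case False
  have q: "real CARD('a) > 1" using CARD_field_ge_2[where 'a='a] by simp
  have "real CARD('a) powr (- real_of_int (fls_subdegree x)) < real CARD('a) powr 0
        \<longleftrightarrow> - real_of_int (fls_subdegree x) < 0"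
    using q by (rule powr_less_cancel_iff)
  then show ?thesis using False q by (simp add: absK_def)
qed (simp add: absK_def)

lemma in_MK_iff: "(x::'a::{field,finite} fls) \<in> MK \<longleftrightarrow> (\<exists>c. c $ 0 = 0 \<and> x = fps_to_fls c)"
proof
  assume "x \<in> MK"
  then have h: "x = 0 \<or> fls_subdegree x > 0" by (simp add: MK_def absK_less_1_iff)
  show "\<exists>c. c $ 0 = 0 \<and> x = fps_to_fls c"
  proof (cases "x = 0")
    case True then show ?thesis by (intro exI[of _ 0]) simp
  next
    case False
    with h have s: "fls_subdegree x > 0" by simp
    then have "x $$ 0 = 0" by (simp add: fls_eq0_below_subdegree)
    with s show ?thesis by (intro exI[of _ "fls_regpart x"]) simp
  qed
next
  assume "\<exists>c. c $ 0 = 0 \<and> x = fps_to_fls c"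
  then obtain c where c: "c $ 0 = 0" "x = fps_to_fls c" by blast
  show "x \<in> MK"
  proof (cases "c = 0")
    case True then show ?thesis using c by (simp add: MK_def absK_def)
  next
    case False
    then have "subdegree c \<noteq> 0" using c(1) nth_subdegree_nonzero[of c] by metis
    then show ?thesis using c by (simp add: MK_def absK_less_1_iff fls_subdegree_fls_to_fps)
  qed
qed

lemma fps_to_fls_in_MK: "c $ 0 = 0 \<Longrightarrow> fps_to_fls c \<in> (MK :: 'a::{field,finite} fls set)"
  by (rule in_MK_iff[THEN iffD2]) blast

lemma MK_elim:
  assumes "x \<in> (MK :: 'a::{field,finite} fls set)"
  obtains c where "c $ 0 = 0" "x = fps_to_fls c"
  using in_MK_iff[THEN iffD1, OF assms] by blast

lemma fls_X_in_MK: "fls_X \<in> (MK :: 'a::{field,finite} fls set)"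
  using fps_to_fls_in_MK[of "fps_X :: 'a fps"] by simp

lemma one_plus_fps_to_fls_in_UK: "c $ 0 = 0 \<Longrightarrow> 1 + fps_to_fls c \<in> (UK :: 'a::{field,finite} fls set)"
  unfolding UK_def by (intro imageI fps_to_fls_in_MK)

lemma UK_elim:
  assumes "u \<in> (UK :: 'a::{field,finite} fls set)"
  obtains c where "c $ 0 = 0" "u = 1 + fps_to_fls c"
  using assms unfolding UK_def by (auto elim: MK_elim)

lemma zero_not_in_UK: "0 \<notin> (UK :: 'a::{field,finite} fls set)"
proof
  assume "0 \<in> (UK :: 'a fls set)"
  then obtain c :: "'a fps" where "c $ 0 = 0" "0 = 1 + fps_to_fls c" by (rule UK_elim)
  then have "fps_to_fls (1 + c) = 0" and "(1 + c) $ 0 = 1" by simp_all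
  then show False by (metis fps_to_fls_eq_0_iff fps_zero_nth zero_neq_one)
qed

lemma mult_in_UK:
  assumes "u \<in> UK" "v \<in> (UK :: 'a::{field,finite} fls set)"
  shows "u * v \<in> UK"
proof -
  obtain c where c: "c $ 0 = 0" "u = 1 + fps_to_fls c" using assms(1) by (rule UK_elim)
  obtain d where d: "d $ 0 = 0" "v = 1 + fps_to_fls d" using assms(2) by (rule UK_elim)
  have "u * v = 1 + fps_to_fls (c + d + c * d)" using c d by (simp add: algebra_simps fls_times_fps_to_fls)
  moreover have "(c + d + c * d) $ 0 = 0" using c d by simp
  ultimately show ?thesis by (metis one_plus_fps_to_fls_in_UK)
qed

lemma inverse_in_UK:
  assumes "u \<in> (UK :: 'a::{field,finite} fls set)"
  shows "inverse u \<in> UK"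
proof -
  obtain c where c: "c $ 0 = 0" "u = 1 + fps_to_fls c" using assms by (rule UK_elim)
  define P where "P = 1 + c"
  define Q where "Q = inverse P"
  have P0: "P $ 0 = 1" using c by (simp add: P_def)
  have uP: "u = fps_to_fls P" using c by (simp add: P_def)
  have "P * Q = 1" using P0 unfolding Q_def by (simp add: inverse_mult_eq_1')
  then have "u * fps_to_fls Q = 1" unfolding uP by (simp flip: fls_times_fps_to_fls)
  then have "inverse u = fps_to_fls Q" by (rule inverse_unique)
  then have "inverse u = 1 + fps_to_fls (Q - 1)" by simp
  moreover have "(Q - 1) $ 0 = 0" using P0 by (simp add: Q_def)
  ultimately show ?thesis by (metis one_plus_fps_to_fls_in_UK)
qed

lemma ballK_subset_UK:
  assumes "\<alpha> \<in> (UK :: 'a::{field,finite} fls set)"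
  shows "ballK \<alpha> (absK (\<alpha> * fls_X)) \<subseteq> UK"
proof
  obtain c where c: "c $ 0 = 0" "\<alpha> = 1 + fps_to_fls c" using assms by (rule UK_elim)
  have "\<alpha> * fls_X = fps_to_fls ((1 + c) * fps_X)" by (simp add: c fls_times_fps_to_fls)
  then have "\<alpha> * fls_X \<in> MK" by (simp add: fps_to_fls_in_MK)
  then have small: "absK (\<alpha> * fls_X) < 1" by (simp add: MK_def)
  fix u assume "u \<in> ballK \<alpha> (absK (\<alpha> * fls_X))"
  then have "u - \<alpha> \<in> MK" using small by (simp add: ballK_def MK_def)
  then obtain d where d: "d $ 0 = 0" "u - \<alpha> = fps_to_fls d" by (rule MK_elim)
  have "u = \<alpha> + (u - \<alpha>)" by simp
  also have "\<dots> = 1 + fps_to_fls (c + d)" using c d by simp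
  finally have "u = 1 + fps_to_fls (c + d)" .
  moreover have "(c + d) $ 0 = 0" using c d by simp
  ultimately show "u \<in> UK" by (metis one_plus_fps_to_fls_in_UK)
qed

section \<open>Convergence of formal Laurent series\<close>

lemma dist_fls_le_if_coeffs_agree:
  fixes x y :: "'b::group_add fls"
  assumes "\<And>k. k < int N \<Longrightarrow> (x - y) $$ k = 0"
  shows "dist x y \<le> (1/2::real) ^ N"
proof (cases "x = y")
  case False
  then have s: "int N \<le> fls_subdegree (x - y)" by (intro fls_subdegree_geI assms) simp
  then have "dist x y = inverse (2 ^ nat (fls_subdegree (x - y)))"
    using False unfolding dist_fls_def by simp
  also have "\<dots> \<le> inverse (2 ^ N)"
    by (rule le_imp_inverse_le) (use s in \<open>auto intro: power_increasing\<close>)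
  finally show ?thesis by (simp add: power_one_over inverse_eq_divide)
qed simp

lemma fls_coeffs_agree_if_dist_less:
  fixes x y :: "'b::group_add fls"
  assumes d: "dist x y < (1/2::real) ^ N" and k: "k \<le> int N"
  shows "(x - y) $$ k = 0"
proof (cases "x = y")
  case False
  define s where "s = fls_subdegree (x - y)"
  show ?thesis
  proof (cases "0 \<le> s")
    case False
    then have "dist x y = 2 ^ nat (- s)" using \<open>x \<noteq> y\<close> unfolding dist_fls_def s_def by auto
    moreover have "(1::real) \<le> 2 ^ nat (- s)" "(1/2::real) ^ N \<le> 1" by (simp_all add: power_le_one)
    ultimately show ?thesis using d by linarith
  next
    case True
    then have "dist x y = inverse (2 ^ nat s)" using \<open>x \<noteq> y\<close> unfolding dist_fls_def s_def by auto
    with d have "inverse ((2::real) ^ nat s) < inverse (2 ^ N)"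
      by (simp only: power_one_over inverse_eq_divide)
    then have "(2::real) ^ N < 2 ^ nat s" by (simp add: inverse_less_iff_less)
    then have "N < nat s" by (simp add: power_strict_increasing_iff)
    then have "k < fls_subdegree (x - y)" using k True s_def by linarith
    then show ?thesis by (rule fls_eq0_below_subdegree)
  qed
qed simp

lemma LIMSEQ_fls_if_coeffs_agree:
  assumes "\<And>N k. k < int N \<Longrightarrow> (s N - L) $$ k = 0"
  shows "s \<longlonglongrightarrow> (L::'b::group_add fls)"
proof -
  have "(\<lambda>N. dist (s N) L) \<longlonglongrightarrow> 0"
  proof (rule Lim_null_comparison[where g="\<lambda>N. (1/2::real)^N"])
    show "\<forall>\<^sub>F N in sequentially. norm (dist (s N) L) \<le> (1 / 2) ^ N"
    proof (rule always_eventually, intro allI)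
      fix N
      have "dist (s N) L \<le> (1/2)^N" by (rule dist_fls_le_if_coeffs_agree) (rule assms)
      then show "norm (dist (s N) L) \<le> (1/2)^N"
        by (simp only: real_norm_def abs_of_nonneg[OF zero_le_dist])
    qed
    show "(\<lambda>N. (1/2::real) ^ N) \<longlonglongrightarrow> 0" by (rule LIMSEQ_realpow_zero) auto
  qed
  then show ?thesis by (rule tendsto_dist_iff[THEN iffD2])
qed

lemma fps_compose_nth_eq_partial_sum:
  fixes b :: "'a::comm_ring_1 fps"
  assumes b0: "b $ 0 = 0" and jM: "j < M"
  shows "(Abs_fps c oo b) $ j = (\<Sum>n<M. fps_const (c n) * b ^ n) $ j"
proof -
  have "(\<Sum>n<M. fps_const (c n) * b ^ n) $ j = (\<Sum>n\<in>{0..j}. c n * b ^ n $ j)"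
    unfolding fps_sum_nth fps_mult_left_const_nth
  proof (rule sum.mono_neutral_right)
    show "\<forall>i\<in>{..<M} - {0..j}. c i * b ^ i $ j = 0"
      using startsby_zero_power_prefix[OF b0] by auto
  qed (use jM in auto)
  then show ?thesis by (simp add: fps_compose_nth)
qed

lemma fps_to_fls_sum: "fps_to_fls (sum f A) = (\<Sum>i\<in>A. fps_to_fls (f i))"
  by (induction A rule: infinite_finite_induct) auto

lemma sums_times_fps_compose:
  fixes b :: "'a::field fps"
  assumes b0: "b $ 0 = 0"
  shows "(\<lambda>n. fps_to_fls G * (fls_const (c n) * fps_to_fls b ^ n)) sums fps_to_fls (G * (Abs_fps c oo b))"
  unfolding sums_def
proof (rule LIMSEQ_fls_if_coeffs_agree)
  fix N k assume k: "k < int N"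
  define Q where "Q = (\<Sum>n<N. fps_const (c n) * b ^ n)"
  have partial_sum: "(\<Sum>n<N. fps_to_fls G * (fls_const (c n) * fps_to_fls b ^ n)) = fps_to_fls (G * Q)"
    by (simp add: Q_def fps_to_fls_sum fls_times_fps_to_fls fps_to_fls_power sum_distrib_left)
  have "(Q - (Abs_fps c oo b)) $ j = 0" if "j < N" for j
    using fps_compose_nth_eq_partial_sum[OF b0 that, of c] by (simp add: Q_def)
  then have agree: "(G * (Q - (Abs_fps c oo b))) $ j = 0" if "j < N" for j
    unfolding fps_mult_nth using that by (intro sum.neutral) auto
  show "((\<Sum>n<N. fps_to_fls G * (fls_const (c n) * fps_to_fls b ^ n))
      - fps_to_fls (G * (Abs_fps c oo b))) $$ k = 0"
  proof (cases "k < 0")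
    case True then show ?thesis by (simp add: partial_sum flip: fps_to_fls_minus)
  next
    case False
    then have "nat k < N" using k by linarith
    then show ?thesis using False agree[of "nat k"]
      by (simp add: partial_sum right_diff_distrib flip: fps_to_fls_minus)
  qed
qed

lemma sums_fps_compose:
  fixes b :: "'a::field fps"
  assumes "b $ 0 = 0"
  shows "(\<lambda>n. fls_const (c n) * fps_to_fls b ^ n) sums fps_to_fls (Abs_fps c oo b)"
  using sums_times_fps_compose[OF assms, of 1 c] by simp

lemma fps_power_nth_congr:
  fixes x y :: "'a::comm_ring_1 fps"
  assumes "\<forall>j<M. x $ j = y $ j" and "j < M"
  shows "(x ^ i) $ j = (y ^ i) $ j"
  using assms(2)
proof (induction i arbitrary: j)
  case (Suc i)
  show ?case unfolding power_Suc fps_mult_nth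
    by (rule sum.cong) (use assms(1) Suc in auto)
qed simp

lemma fps_compose_nth_congr:
  fixes x y :: "'a::comm_ring_1 fps"
  assumes "\<forall>j<M. x $ j = y $ j" and "j < M"
  shows "(B oo x) $ j = (B oo y) $ j"
  unfolding fps_compose_nth using fps_power_nth_congr[OF assms] by simp

section \<open>Hasse derivatives and Taylor expansion\<close>

definition fps_hasse_deriv :: "nat \<Rightarrow> 'a::comm_semiring_1 fps \<Rightarrow> 'a fps" where
  "fps_hasse_deriv m A = Abs_fps (\<lambda>j. of_nat ((j + m) choose m) * A $ (j + m))"

lemma fps_X_plus_power_nth:
  fixes H :: "'a::comm_ring_1 fps"
  assumes "n \<le> k"
  shows "(fps_X + H) ^ n $ k = (\<Sum>m\<le>n. of_nat (n choose m) * H ^ m $ (k - (n - m)))"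
proof -
  have "(fps_X + H) ^ n = (\<Sum>m\<le>n. fps_const (of_nat (n choose m)) * (H ^ m * fps_X ^ (n - m)))"
    using binomial_ring[of H fps_X n] by (simp add: add.commute mult.assoc fps_of_nat)
  then show ?thesis
    using assms by (auto simp: fps_sum_nth fps_X_power_mult_right_nth intro!: sum.cong)
qed

lemma fps_compose_X_plus_nth:
  fixes A H :: "'a::comm_ring_1 fps"
  assumes H0: "H $ 0 = 0"
  shows "(A oo (fps_X + H)) $ k = (\<Sum>m\<le>k. (fps_hasse_deriv m A * H ^ m) $ k)"
proof -
  define g where "g m j = of_nat ((j + m) choose m) * A $ (j + m) * H ^ m $ (k - j)" for m j
  have hasse_term: "(fps_hasse_deriv m A * H ^ m) $ k = (\<Sum>j\<le>k - m. g m j)" if "m \<le> k" for m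
  proof -
    have "(fps_hasse_deriv m A * H ^ m) $ k = (\<Sum>j\<le>k. g m j)"
      by (simp add: fps_mult_nth fps_hasse_deriv_def g_def atLeast0AtMost)
    also have "\<dots> = (\<Sum>j\<le>k - m. g m j)"
    proof (rule sum.mono_neutral_right)
      show "\<forall>j\<in>{..k} - {..k - m}. g m j = 0"
      proof
        fix j assume "j \<in> {..k} - {..k - m}"
        then have "k - j < m" by auto
        then show "g m j = 0" using startsby_zero_power_prefix[OF H0, of m] by (simp add: g_def)
      qed
    qed auto
    finally show ?thesis .
  qed
  have "(A oo (fps_X + H)) $ k = (\<Sum>n\<le>k. A $ n * (fps_X + H) ^ n $ k)"
    by (simp add: fps_compose_nth atLeast0AtMost)
  also have "\<dots> = (\<Sum>n\<le>k. \<Sum>m\<le>n. g m (n - m))"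
    by (intro sum.cong refl)
       (auto simp: fps_X_plus_power_nth g_def sum_distrib_left mult_ac intro!: sum.cong)
  also have "\<dots> = (\<Sum>(m, j)\<in>{(m, j). m + j \<le> k}. g m j)"
    by (rule sum.triangle_reindex_eq[symmetric])
  also have "{(m, j). m + j \<le> k} = Sigma {..k} (\<lambda>m. {..k - m})" by auto
  also have "(\<Sum>(m, j)\<in>Sigma {..k} (\<lambda>m. {..k - m}). g m j) = (\<Sum>m\<le>k. \<Sum>j\<le>k - m. g m j)"
    by (simp add: sum.Sigma)
  also have "\<dots> = (\<Sum>m\<le>k. (fps_hasse_deriv m A * H ^ m) $ k)"
    by (intro sum.cong refl) (simp add: hasse_term)
  finally show ?thesis .
qed

lemma fps_compose_X_power_nth:
  fixes A :: "'a::comm_ring_1 fps"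
  assumes "N \<ge> 1" "j \<le> k"
  shows "(A oo fps_X ^ N) $ j = (\<Sum>m\<le>k. fps_const (A $ m) * fps_X ^ (N * m)) $ j"
proof -
  have "(A oo fps_X ^ N) $ j = (\<Sum>i\<in>{0..j}. A $ i * (if j = N * i then 1 else 0))"
    by (simp add: fps_compose_nth power_mult[symmetric] fps_X_power_nth)
  also have "\<dots> = (\<Sum>i\<le>k. A $ i * (if j = N * i then 1 else 0))"
  proof (rule sum.mono_neutral_left)
    show "\<forall>i\<in>{..k} - {0..j}. A $ i * (if j = N * i then 1 else 0) = 0"
    proof
      fix i assume "i \<in> {..k} - {0..j}"
      then have "j < i" by auto
      also have "i \<le> N * i" using assms(1) by simp
      finally show "A $ i * (if j = N * i then 1 else 0) = 0" by simp
    qed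
  qed (use assms in auto)
  also have "\<dots> = (\<Sum>m\<le>k. fps_const (A $ m) * fps_X ^ (N * m)) $ j"
    by (simp add: fps_sum_nth fps_X_power_nth)
  finally show ?thesis .
qed

lemma fps_hasse_deriv_functional_eq_nth:
  fixes A :: "'a::comm_ring_1 fps"
  assumes N: "N \<ge> 1"
    and FE: "A oo (fps_X + fps_X ^ N * (1 + fps_X)) = A * (A oo fps_X ^ N)"
  shows "(\<Sum>m\<le>k. ((fps_hasse_deriv m A * (1 + fps_X) ^ m - fps_const (A $ m) * A)
            * fps_X ^ (N * m)) $ k) = 0"
proof -
  define H :: "'a fps" where "H = fps_X ^ N * (1 + fps_X)"
  have H0: "H $ 0 = 0" using N by (simp add: H_def)
  have Hm: "H ^ m = (1 + fps_X) ^ m * fps_X ^ (N * m)" for m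
    by (simp add: H_def power_mult_distrib power_mult mult.commute)
  have lhs: "(A oo (fps_X + H)) $ k
      = (\<Sum>m\<le>k. (fps_hasse_deriv m A * (1 + fps_X) ^ m * fps_X ^ (N * m)) $ k)"
    by (simp add: fps_compose_X_plus_nth[OF H0] Hm mult.assoc)
  define T where "T = (\<Sum>m\<le>k. fps_const (A $ m) * fps_X ^ (N * m))"
  have "(A * (A oo fps_X ^ N)) $ k = (A * T) $ k"
    unfolding fps_mult_nth T_def
    by (intro sum.cong refl arg_cong2[where f = "(*)"] fps_compose_X_power_nth[OF N]) auto
  also have "\<dots> = (\<Sum>m\<le>k. (fps_const (A $ m) * A * fps_X ^ (N * m)) $ k)"
    by (simp add: T_def sum_distrib_left fps_sum_nth mult_ac)
  finally have rhs: "(A * (A oo fps_X ^ N)) $ k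
      = (\<Sum>m\<le>k. (fps_const (A $ m) * A * fps_X ^ (N * m)) $ k)" .
  have "(A oo (fps_X + H)) $ k = (A * (A oo fps_X ^ N)) $ k"
    using FE by (simp add: H_def)
  then show ?thesis
    unfolding lhs rhs by (simp add: sum_subtractf left_diff_distrib)
qed

lemma fps_hasse_deriv_times_X_plus_1_power:
  fixes A :: "'a::comm_ring_1 fps"
  assumes FE: "\<And>N. N \<ge> 1 \<Longrightarrow> A oo (fps_X + fps_X ^ N * (1 + fps_X)) = A * (A oo fps_X ^ N)"
  shows "fps_hasse_deriv m A * (1 + fps_X) ^ m = fps_const (A $ m) * A"
proof -
  define D where "D m = fps_hasse_deriv m A * (1 + fps_X) ^ m - fps_const (A $ m) * A" for m
  have "D m = 0"
  proof (induction m rule: less_induct)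
    case (less m)
    show "D m = 0"
    proof (rule fps_ext)
      fix d
      \<comment> \<open>With \<open>N > d\<close>, only the summand \<open>m' = m\<close> reaches degree \<open>N m + d\<close> without being killed
        by the induction hypothesis or by the shift \<open>X\<^sup>N\<^sup>m\<^sup>'\<close>.\<close>
      define N where "N = Suc d"
      define k where "k = N * m + d"
      have "(\<Sum>m'\<le>k. (D m' * fps_X ^ (N * m')) $ k) = (\<Sum>m'\<le>k. if m' = m then D m $ d else 0)"
      proof (rule sum.cong[OF refl])
        fix m' assume "m' \<in> {..k}"
        show "(D m' * fps_X ^ (N * m')) $ k = (if m' = m then D m $ d else 0)"
        proof (cases m' m rule: linorder_cases)
          case less
          then show ?thesis using less.IH by simp
        next
          case equal
          then show ?thesis by (simp add: fps_X_power_mult_right_nth k_def)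
        next
          case greater
          then have "N * (m + 1) \<le> N * m'" by (intro mult_le_mono2) simp
          then have "k < N * m'" by (simp add: k_def N_def)
          then show ?thesis using greater by (simp add: fps_X_power_mult_right_nth)
        qed
      qed
      also have "\<dots> = D m $ d"
      proof -
        have "m \<le> k" by (simp add: k_def N_def)
        then show ?thesis by simp
      qed
      finally show "D m $ d = 0 $ d"
        using fps_hasse_deriv_functional_eq_nth[of N A k] FE[of N] by (simp add: D_def N_def)
    qed
  qed
  then show ?thesis by (simp add: D_def)
qed

lemma fps_hasse_deriv_eq_0_iff:
  fixes A :: "'a::idom fps"
  assumes FE: "\<And>N. N \<ge> 1 \<Longrightarrow> A oo (fps_X + fps_X ^ N * (1 + fps_X)) = A * (A oo fps_X ^ N)"
  shows "fps_hasse_deriv m A = 0 \<longleftrightarrow> A $ m = 0"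
proof
  assume "fps_hasse_deriv m A = 0"
  then have "fps_hasse_deriv m A $ 0 = 0" by simp
  then show "A $ m = 0" by (simp add: fps_hasse_deriv_def)
next
  assume "A $ m = 0"
  then have "fps_hasse_deriv m A * (1 + fps_X) ^ m = 0"
    by (simp add: fps_hasse_deriv_times_X_plus_1_power[OF FE])
  moreover have "((1 + fps_X) ^ m :: 'a fps) $ 0 = 1" by (simp add: fps_power_zeroth)
  ultimately show "fps_hasse_deriv m A = 0" by auto
qed

lemma fps_nth_eq_0_if_hasse_deriv_1_eq_0:
  fixes A :: "'a::idom fps"
  assumes "fps_hasse_deriv 1 A = 0" and "\<not> CHAR('a) dvd k"
  shows "A $ k = 0"
proof -
  obtain j where j: "k = Suc j" using assms(2) by (cases k) auto
  have "fps_hasse_deriv 1 A $ j = 0" using assms(1) by simp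
  then have "of_nat (Suc j) * A $ Suc j = 0" by (simp add: fps_hasse_deriv_def)
  moreover have "(of_nat (Suc j) :: 'a) \<noteq> 0" using assms(2) j of_nat_eq_0_iff_char_dvd by blast
  ultimately show ?thesis using j by simp
qed

section \<open>Frobenius in prime characteristic\<close>

lemma prime_CHAR_finite_field: "prime CHAR('a::{field,finite})"
  by (rule prime_CHAR_semidom) (simp add: finite_imp_CHAR_pos)

lemma frobenius_inj:
  fixes x y :: "'b::idom"
  assumes p: "prime CHAR('b)" and eq: "x ^ CHAR('b) = y ^ CHAR('b)"
  shows "x = y"
proof -
  have "x ^ CHAR('b) = (x - y) ^ CHAR('b) + y ^ CHAR('b)"
    using freshmans_dream[OF p refl, of "x - y" y] by simp
  then have "(x - y) ^ CHAR('b) = 0" using eq by simp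
  then show ?thesis by simp
qed

lemma of_nat_power_CHAR:
  assumes "prime CHAR('b::comm_semiring_1)"
  shows "(of_nat k :: 'b) ^ CHAR('b) = of_nat k"
  using freshmans_dream_sum[OF assms refl, of "\<lambda>_. 1" "{..<k}"] by simp

lemma fps_power_CHAR_nth:
  fixes B :: "'b::comm_ring_1 fps"
  assumes prime: "prime CHAR('b)"
  shows "(B ^ CHAR('b)) $ k = (if CHAR('b) dvd k then (B $ (k div CHAR('b))) ^ CHAR('b) else 0)"
proof -
  define p where "p = CHAR('b)"
  have p0: "p > 0" using prime by (simp add: p_def prime_gt_0_nat)
  define Q where "Q = (\<Sum>n\<le>k. fps_const (B $ n) * fps_X ^ n)"
  have "\<forall>j<Suc k. B $ j = Q $ j"
    by (auto simp: Q_def fps_sum_nth fps_X_power_nth mult_delta_right)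
  then have "(B ^ p) $ k = (Q ^ p) $ k" by (rule fps_power_nth_congr) simp
  also have "Q ^ p = (\<Sum>n\<le>k. (fps_const (B $ n) * fps_X ^ n) ^ p)"
    unfolding Q_def by (rule freshmans_dream_sum) (simp_all add: p_def prime)
  also have "\<dots> $ k = (\<Sum>n\<le>k. if k = n * p then (B $ n) ^ p else 0)"
    by (simp add: fps_sum_nth power_mult_distrib fps_X_power_nth mult_delta_right cong: if_cong
        flip: power_mult)
  also have "\<dots> = (if p dvd k then (B $ (k div p)) ^ p else 0)"
  proof (cases "p dvd k")
    case True
    then obtain q where q: "k = q * p" by (metis dvd_div_mult_self)
    have "(\<Sum>n\<le>k. if k = n * p then (B $ n) ^ p else 0) = (\<Sum>n\<le>k. if n = q then (B $ n) ^ p else 0)"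
      using p0 q by (intro sum.cong) auto
    moreover have "q \<le> k" using p0 q by simp
    ultimately show ?thesis using q p0 by simp
  qed (auto intro!: sum.neutral)
  finally show ?thesis by (simp add: p_def)
qed

lemma fps_eq_power_CHAR:
  fixes A :: "'b::comm_ring_1 fps"
  assumes prime: "prime CHAR('b)"
    and vanish: "\<And>k. \<not> CHAR('b) dvd k \<Longrightarrow> A $ k = 0"
    and fixed: "\<And>k. (A $ k) ^ CHAR('b) = A $ k"
  shows "A = Abs_fps (\<lambda>n. A $ (CHAR('b) * n)) ^ CHAR('b)"
  by (rule fps_ext) (auto simp: fps_power_CHAR_nth[OF prime] fixed vanish)

section \<open>Maps of the 1-units given by a power series\<close>

definition unit_series_map :: "'a::field fps \<Rightarrow> 'a fls \<Rightarrow> 'a fls" where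
  "unit_series_map B u = fps_to_fls (B oo (fls_regpart u - 1))"

lemma unit_series_map_one_plus [simp]: "unit_series_map B (1 + fps_to_fls c) = fps_to_fls (B oo c)"
  by (simp add: unit_series_map_def)

lemma unit_series_map_in_UK:
  assumes "B $ 0 = 1" and "u \<in> (UK :: 'a::{field,finite} fls set)"
  shows "unit_series_map B u \<in> UK"
proof -
  obtain c where c: "c $ 0 = 0" "u = 1 + fps_to_fls c" using assms(2) by (rule UK_elim)
  have "unit_series_map B u = 1 + fps_to_fls ((B oo c) - 1)" using c by simp
  moreover have "((B oo c) - 1) $ 0 = 0" using assms(1) by simp
  ultimately show ?thesis by (metis one_plus_fps_to_fls_in_UK)
qed

lemma unit_series_map_coeffs_agree:
  assumes "u \<in> UK" "v \<in> (UK :: 'a::{field,finite} fls set)"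
    and agree: "\<forall>k<int M. (u - v) $$ k = 0" and k: "k < int M"
  shows "(unit_series_map B u - unit_series_map B v) $$ k = 0"
proof -
  obtain c where c: "c $ 0 = 0" "u = 1 + fps_to_fls c" using assms(1) by (rule UK_elim)
  obtain d where d: "d $ 0 = 0" "v = 1 + fps_to_fls d" using assms(2) by (rule UK_elim)
  have "\<forall>j<M. c $ j = d $ j"
  proof (intro allI impI)
    fix j assume "j < M"
    then have "(u - v) $$ int j = 0" using agree by simp
    then show "c $ j = d $ j" using c d by (simp add: fps_sub_nth)
  qed
  moreover have "unit_series_map B u - unit_series_map B v = fps_to_fls ((B oo c) - (B oo d))"
    using c d by simp
  ultimately show ?thesis
    using k fps_compose_nth_congr[of M c d "nat k" B] by (cases "k < 0") (simp_all add: fps_sub_nth)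
qed

lemma continuous_on_unit_series_map: "continuous_on (UK :: 'a::{field,finite} fls set) (unit_series_map B)"
  unfolding continuous_on_iff
proof (intro ballI allI impI)
  fix v :: "'a fls" and e :: real assume v: "v \<in> UK" and e: "0 < e"
  have "(\<lambda>n. (1/2::real)^n) \<longlonglongrightarrow> 0" by (rule LIMSEQ_realpow_zero) auto
  from order_tendstoD(2)[OF this e] obtain N where N: "(1/2::real)^N < e"
    by (auto simp: eventually_sequentially)
  show "\<exists>d>0. \<forall>u\<in>UK. dist u v < d \<longrightarrow> dist (unit_series_map B u) (unit_series_map B v) < e"
  proof (intro exI[of _ "(1/2::real)^N"] conjI ballI impI)
    fix u assume u: "u \<in> UK" and d: "dist u v < (1/2)^N"
    have "\<forall>k<int (Suc N). (u - v) $$ k = 0" using fls_coeffs_agree_if_dist_less[OF d] by auto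
    then have "dist (unit_series_map B u) (unit_series_map B v) \<le> (1/2)^(Suc N)"
      by (intro dist_fls_le_if_coeffs_agree unit_series_map_coeffs_agree[OF u v])
    also have "(1/2::real)^(Suc N) \<le> (1/2)^N" by (rule power_decreasing) auto
    finally show "dist (unit_series_map B u) (unit_series_map B v) < e" using N by linarith
  qed simp
qed

lemma sums_unit_series_map_reexpansion:
  fixes B :: "'a::{field,finite} fps"
  assumes mult: "\<forall>u\<in>UK. \<forall>v\<in>UK. unit_series_map B (u * v) = unit_series_map B u * unit_series_map B v"
    and \<alpha>: "\<alpha> \<in> UK" and u: "u \<in> UK"
  shows "(\<lambda>n. unit_series_map B \<alpha> * fls_const (B $ n) * fls_X ^ n * ((u - \<alpha>) / (\<alpha> * fls_X)) ^ n)
           sums unit_series_map B u"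
proof -
  \<comment> \<open>\<open>g u = g \<alpha> \<cdot> g (u / \<alpha>)\<close>, and \<open>u / \<alpha> = 1 + X \<cdot> (u - \<alpha>) / (\<alpha> X)\<close> expands \<open>g (u / \<alpha>)\<close> as a series in \<open>(u - \<alpha>) / (\<alpha> X)\<close>.\<close>
  define g where "g = unit_series_map B"
  obtain c where c: "c $ 0 = 0" "\<alpha> = 1 + fps_to_fls c" using \<alpha> by (rule UK_elim)
  have g\<alpha>: "g \<alpha> = fps_to_fls (B oo c)" using c by (simp add: g_def)
  have \<alpha>_nz: "\<alpha> \<noteq> 0" using \<alpha> zero_not_in_UK by blast
  define w where "w = u * inverse \<alpha>"
  have "w \<in> UK" unfolding w_def by (intro mult_in_UK inverse_in_UK \<alpha> u)
  then obtain e where e: "e $ 0 = 0" "w = 1 + fps_to_fls e" by (rule UK_elim)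
  have "\<alpha> * w = u" using \<alpha>_nz by (simp add: w_def)
  then have gu: "g u = g \<alpha> * g w" using mult \<alpha> \<open>w \<in> UK\<close> by (auto simp: g_def)
  have e_eq: "fps_to_fls e = fls_X * ((u - \<alpha>) / (\<alpha> * fls_X))"
  proof -
    have "fps_to_fls e = w - 1" using e by simp
    also have "\<dots> = fls_X * ((u - \<alpha>) / (\<alpha> * fls_X))" using \<alpha>_nz by (simp add: w_def field_simps)
    finally show ?thesis .
  qed
  have "(\<lambda>n. fps_to_fls (B oo c) * (fls_const (B $ n) * fps_to_fls e ^ n))
      sums fps_to_fls ((B oo c) * (Abs_fps (($) B) oo e))"
    by (rule sums_times_fps_compose[OF e(1)])
  moreover have "g w = fps_to_fls (B oo e)" using e(2) by (simp add: g_def)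
  then have "fps_to_fls ((B oo c) * (Abs_fps (($) B) oo e)) = g u"
    by (simp add: gu g\<alpha> fps_nth_inverse fls_times_fps_to_fls)
  moreover have "fps_to_fls (B oo c) * (fls_const (B $ n) * fps_to_fls e ^ n)
      = g \<alpha> * fls_const (B $ n) * fls_X ^ n * ((u - \<alpha>) / (\<alpha> * fls_X)) ^ n" for n
    by (simp only: e_eq g\<alpha> power_mult_distrib mult_ac)
  ultimately show ?thesis by (simp add: g_def)
qed

lemma locally_analyticK_unit_series_map:
  fixes B :: "'a::{field,finite} fps"
  assumes mult: "\<forall>u\<in>UK. \<forall>v\<in>UK. unit_series_map B (u * v) = unit_series_map B u * unit_series_map B v"
  shows "locally_analyticK (unit_series_map B)"
  unfolding locally_analyticK_def
proof
  fix \<alpha> :: "'a fls" assume \<alpha>: "\<alpha> \<in> UK"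
  obtain c where c: "c $ 0 = 0" "\<alpha> = 1 + fps_to_fls c" using \<alpha> by (rule UK_elim)
  define \<rho> where "\<rho> = \<alpha> * fls_X"
  have \<rho>_nz: "\<rho> \<noteq> 0" using \<alpha> zero_not_in_UK by (auto simp: \<rho>_def)
  have ball: "ballK \<alpha> (absK \<rho>) \<subseteq> UK" unfolding \<rho>_def using \<alpha> by (rule ballK_subset_UK)
  define cc where "cc n = unit_series_map B \<alpha> * fls_const (B $ n) * fls_X ^ n" for n
  have "cc \<longlonglongrightarrow> 0"
  proof (rule LIMSEQ_fls_if_coeffs_agree)
    fix N k assume "k < int N"
    then have "k < 0 \<or> nat k < N" by linarith
    moreover have "cc N = fps_to_fls ((B oo c) * fps_const (B $ N) * fps_X ^ N)"
      by (simp add: cc_def c fls_times_fps_to_fls fps_to_fls_power)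
    ultimately show "(cc N - 0) $$ k = 0" by (auto simp: fps_X_power_mult_right_nth)
  qed
  moreover have "(\<lambda>n. cc n * ((u - \<alpha>) / \<rho>) ^ n) sums unit_series_map B u"
    if "u \<in> ballK \<alpha> (absK \<rho>)" for u
    unfolding cc_def \<rho>_def using that ball by (intro sums_unit_series_map_reexpansion mult \<alpha>) auto
  moreover have "continuous_on (ballK \<alpha> (absK \<rho>)) (unit_series_map B)"
    using continuous_on_unit_series_map ball by (rule continuous_on_subset)
  ultimately show "\<exists>\<rho>. \<rho> \<noteq> 0 \<and> ballK \<alpha> (absK \<rho>) \<subseteq> UK \<and> analytic_on_ballK (unit_series_map B) \<alpha> \<rho>"
    unfolding analytic_on_ballK_def using \<rho>_nz ball by blast
qed

lemma unit_series_map_in_LambdaK: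
  fixes B :: "'a::{field,finite} fps"
  assumes "B $ 0 = 1"
    and mult: "\<forall>u\<in>UK. \<forall>v\<in>UK. unit_series_map B (u * v) = unit_series_map B u * unit_series_map B v"
  shows "unit_series_map B \<in> LambdaK"
  unfolding LambdaK_def
  using unit_series_map_in_UK[OF assms(1)] mult locally_analyticK_unit_series_map[OF mult] by blast

context
  fixes f :: "'a::{field,finite} fls \<Rightarrow> 'a fls" and a :: "nat \<Rightarrow> 'a"
  assumes expansion: "\<forall>x \<in> MK. (\<lambda>n. fls_const (a n) * x ^ n) sums f (1 + x)"
begin

lemma f_one_plus_fps_to_fls:
  assumes "b $ 0 = 0"
  shows "f (1 + fps_to_fls b) = fps_to_fls (Abs_fps a oo b)"
proof -
  have "(\<lambda>n. fls_const (a n) * fps_to_fls b ^ n) sums f (1 + fps_to_fls b)"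
    using expansion fps_to_fls_in_MK[OF assms] by blast
  then show ?thesis using sums_fps_compose[OF assms] by (rule sums_unique2)
qed

lemma f_functional_equation:
  assumes mult: "\<forall>u\<in>UK. \<forall>v\<in>UK. f (u * v) = f u * f v" and N: "N \<ge> 1"
  shows "Abs_fps a oo (fps_X + fps_X ^ N * (1 + fps_X)) = Abs_fps a * (Abs_fps a oo fps_X ^ N)"
proof -
  define Z :: "'a fps" where "Z = fps_X + fps_X ^ N * (1 + fps_X)"
  have XN0: "(fps_X ^ N :: 'a fps) $ 0 = 0" using N by (simp add: fps_X_power_nth)
  have Z0: "Z $ 0 = 0" using XN0 by (simp add: Z_def)
  have "(1 + fps_X) * (1 + fps_X ^ N) = (1 + Z :: 'a fps)" by (simp add: Z_def algebra_simps)
  then have prod: "1 + fps_to_fls Z = (1 + fps_to_fls fps_X) * (1 + fps_to_fls (fps_X ^ N :: 'a fps))"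
    by (metis fls_times_fps_to_fls fps_one_to_fls fps_to_fls_plus)
  have "fps_to_fls (Abs_fps a oo Z) = f (1 + fps_to_fls Z)" by (rule f_one_plus_fps_to_fls[OF Z0, symmetric])
  also have "\<dots> = f (1 + fps_to_fls fps_X) * f (1 + fps_to_fls (fps_X ^ N))"
    using mult one_plus_fps_to_fls_in_UK[of "fps_X :: 'a fps"] one_plus_fps_to_fls_in_UK[OF XN0]
    by (simp add: prod)
  also have "\<dots> = fps_to_fls (Abs_fps a * (Abs_fps a oo fps_X ^ N))"
    using f_one_plus_fps_to_fls[of fps_X] f_one_plus_fps_to_fls[OF XN0]
    by (simp add: fls_times_fps_to_fls)
  finally show ?thesis unfolding Z_def by simp
qed

lemma coeff_eq_0_iff_hasse_series_sums_0:
  assumes mult: "\<forall>u\<in>UK. \<forall>v\<in>UK. f (u * v) = f u * f v"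
  shows "a m = 0 \<longleftrightarrow>
    (\<forall>x \<in> MK. (\<lambda>j. of_nat ((j + m) choose m) * fls_const (a (j + m)) * x ^ j) sums 0)"
proof -
  define D where "D = fps_hasse_deriv m (Abs_fps a)"
  have terms: "of_nat ((j + m) choose m) * fls_const (a (j + m)) * x ^ j = fls_const (D $ j) * x ^ j"
    for j and x :: "'a fls"
    by (simp add: D_def fps_hasse_deriv_def fls_of_nat)
  have "a m = 0 \<longleftrightarrow> D = 0"
    using fps_hasse_deriv_eq_0_iff[OF f_functional_equation[OF mult]] by (simp add: D_def)
  also have "\<dots> \<longleftrightarrow> (\<forall>x \<in> MK. (\<lambda>j. fls_const (D $ j) * x ^ j) sums 0)"
  proof
    assume "\<forall>x \<in> MK. (\<lambda>j. fls_const (D $ j) * x ^ j) sums 0"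
    then have "(\<lambda>j. fls_const (D $ j) * fps_to_fls fps_X ^ j) sums 0" using fls_X_in_MK by auto
    moreover have "(\<lambda>j. fls_const (D $ j) * fps_to_fls fps_X ^ j) sums fps_to_fls (Abs_fps (($) D) oo fps_X)"
      by (rule sums_fps_compose) simp
    ultimately have "fps_to_fls (Abs_fps (($) D) oo fps_X) = 0" by (rule sums_unique2[symmetric])
    then show "D = 0" by (simp add: fps_nth_inverse)
  qed simp
  finally show ?thesis by (simp only: terms)
qed

lemma coeff_1_eq_0_if_power_CHAR:
  assumes g: "g \<in> LambdaK" and pow: "\<forall>x \<in> MK. f (1 + x) = g (1 + x) ^ CHAR('a)"
  shows "a 1 = 0"
proof -
  have "1 + fls_X \<in> (UK :: 'a fls set)" using one_plus_fps_to_fls_in_UK[of "fps_X :: 'a fps"] by simp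
  then have "g (1 + fls_X) \<in> UK" using g by (simp add: LambdaK_def)
  then obtain c where c: "c $ 0 = 0" "g (1 + fls_X) = 1 + fps_to_fls c" by (rule UK_elim)
  have "fps_to_fls (Abs_fps a) = f (1 + fls_X)" using f_one_plus_fps_to_fls[of fps_X] by simp
  also have "\<dots> = fps_to_fls ((1 + c) ^ CHAR('a))"
    using pow[rule_format, OF fls_X_in_MK] c(2) by (simp add: fps_to_fls_power)
  also have "(1 + c) ^ CHAR('a) = 1 + c ^ CHAR('a)"
    by (rule freshmans_dream[where x = 1 and y = c, simplified]) (simp_all add: prime_CHAR_finite_field)
  finally have "Abs_fps a = 1 + c ^ CHAR('a)" by (simp only: fps_to_fls_eq_iff)
  then have "a 1 = (c ^ CHAR('a)) $ 1"
    using fps_nth_Abs_fps[of a 1] by simp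
  also have "\<dots> = 0"
    using startsby_zero_power_prefix[OF c(1)] prime_gt_1_nat[OF prime_CHAR_finite_field] by blast
  finally show ?thesis .
qed

lemma exists_power_CHAR_root_if_coeff_1_eq_0:
  assumes mult: "\<forall>u\<in>UK. \<forall>v\<in>UK. f (u * v) = f u * f v"
    and a0: "a 0 = 1" and prime_field: "\<forall>n. a n \<in> prime_subfield" and a1: "a 1 = 0"
  shows "\<exists>g\<in>LambdaK. \<forall>x\<in>MK. f (1 + x) = g (1 + x) ^ CHAR('a)"
proof -
  define p where "p = CHAR('a)"
  have prime: "prime p" by (simp add: p_def prime_CHAR_finite_field)
  define B where "B = Abs_fps (\<lambda>n. a (p * n))"
  define g where "g = unit_series_map B"
  have "fps_hasse_deriv 1 (Abs_fps a) = 0"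
    using fps_hasse_deriv_eq_0_iff[OF f_functional_equation[OF mult]] a1 by simp
  then have vanish: "a k = 0" if "\<not> p dvd k" for k
    using fps_nth_eq_0_if_hasse_deriv_1_eq_0[of "Abs_fps a" k] that by (simp add: p_def)
  have fixed: "a k ^ p = a k" for k
  proof -
    obtain n where "a k = of_nat n" using prime_field by (auto simp: prime_subfield_def)
    then show ?thesis using of_nat_power_CHAR[OF prime_CHAR_finite_field[where 'a = 'a]] by (simp add: p_def)
  qed
  have A_eq: "Abs_fps a = B ^ p"
    using fps_eq_power_CHAR[of "Abs_fps a"] prime vanish fixed by (simp add: B_def p_def)
  have root: "g u ^ p = f u" if u: "u \<in> UK" for u
  proof -
    obtain c where c: "c $ 0 = 0" "u = 1 + fps_to_fls c" using u by (rule UK_elim)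
    have "g u ^ p = fps_to_fls ((B oo c) ^ p)" using c by (simp add: g_def fps_to_fls_power)
    also have "(B oo c) ^ p = Abs_fps a oo c" by (simp add: fps_compose_power[OF c(1)] A_eq)
    finally show ?thesis using f_one_plus_fps_to_fls[OF c(1)] c(2) by simp
  qed
  have "g (u * v) = g u * g v" if "u \<in> UK" "v \<in> UK" for u v
  proof (rule frobenius_inj)
    show "prime CHAR('a fls)" by (simp add: prime_CHAR_finite_field)
    have "g (u * v) ^ p = f (u * v)" using root mult_in_UK[OF that] .
    also have "\<dots> = f u * f v" using mult that by blast
    also have "\<dots> = (g u * g v) ^ p" using root that by (simp add: power_mult_distrib)
    finally show "g (u * v) ^ CHAR('a fls) = (g u * g v) ^ CHAR('a fls)" by (simp add: p_def)
  qed
  then have "g \<in> LambdaK" unfolding g_def using a0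
    by (intro unit_series_map_in_LambdaK) (auto simp: B_def)
  moreover have "\<forall>x\<in>MK. f (1 + x) = g (1 + x) ^ CHAR('a)"
    using root by (simp add: UK_def p_def)
  ultimately show ?thesis by blast
qed

end

theorem lemma2p2:
  fixes f :: "'a::{field,finite} fls \<Rightarrow> 'a fls" and a :: "nat \<Rightarrow> 'a"
  assumes "f \<in> LambdaK"
    and "a 0 = 1" and "\<forall>n. a n \<in> prime_subfield"
    and "\<forall>x \<in> MK. (\<lambda>n. fls_const (a n) * x ^ n) sums f (1 + x)"
  shows "(\<forall>m. a m = 0 \<longleftrightarrow>
            (\<forall>x \<in> MK. (\<lambda>j. of_nat ((j + m) choose m) * fls_const (a (j + m)) * x ^ j) sums 0))
       \<and> (a 1 = 0 \<longleftrightarrow> (\<exists>g \<in> LambdaK. \<forall>x \<in> MK. f (1 + x) = g (1 + x) ^ CHAR('a)))"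
proof -
  have mult: "\<forall>u\<in>UK. \<forall>v\<in>UK. f (u * v) = f u * f v" using assms(1) by (simp add: LambdaK_def)
  show ?thesis
    using coeff_eq_0_iff_hasse_series_sums_0[OF assms(4) mult]
      exists_power_CHAR_root_if_coeff_1_eq_0[OF assms(4) mult assms(2,3)]
      coeff_1_eq_0_if_power_CHAR[OF assms(4)]
    by blast
qed

end
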